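(* Let $\Theta$ be a parameter space, $L(\boldsymbol{\theta}\mid D)$, $L(\boldsymbol{\theta}\mid D_0)$ likelihoods of the current and historical data, $\xi\in[0,1]$, $\alpha\in(-1,\infty)$, $z=(1+\alpha)/2$, and let $\pi_0,\tilde\pi_0$ be two baseline prior densities. Let $g^*$ (resp. $\tilde g^*$) be the generalized power posterior with baseline prior $\pi_0$ (resp. $\tilde\pi_0$): $$g^*(\boldsymbol{\theta})\propto\{(1-\xi)p_0(\boldsymbol{\theta})^z+\xi p_1(\boldsymbol{\theta})^z\}^{1/z},\quad p_0=L(\cdot\mid D)\pi_0,\ p_1=L(\cdot\mid D)L(\cdot\mid D_0)\pi_0,$$ and $\tilde g^*$ defined likewise with $\tilde\pi_0$ in place of $\pi_0$. Assume there is a measurable $\mathcal{A}\subset\Theta$ with $\pi_0(\mathcal{A})=\tilde\pi_0(\mathcal{A})=1$ and constants $0<m_L\le1\le M_L<\infty$ such that $m_L\le L(\boldsymbol{\theta}\mid D)\le M_L$ and $m_L\le L(\boldsymbol{\theta}\mid D_0)\le M_L$ for all $\boldsymbol{\theta}\in\mathcal{A}$, and constants $0<m_\pi\le1\le M_\pi$ with $m_\pi\le\pi_0(\boldsymbol{\theta})\le M_\pi$ and $m_\pi\le\tilde\pi_0(\boldsymbol{\theta})\le M_\pi$ for all $\boldsymbol{\theta}\in\Theta$. Then there exists a function $\alpha\mapsto K(\alpha)$ on $(-1,\infty)$ such that $$d_{\mathrm{TV}}(g^*,\tilde g^* )\le K(\alpha)\,d_{\mathrm{TV}}(\pi_0,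\tilde\pi_0).$$
   Context: $d_{\mathrm{TV}}(p,q)=\frac12\int_\Theta|p(\boldsymbol{\theta})-q(\boldsymbol{\theta})|d\boldsymbol{\theta}$. *)

theory Defs
  imports "HOL-Analysis.Analysis"
begin

definition prob_density :: "'a measure \<Rightarrow> ('a \<Rightarrow> real) \<Rightarrow> bool" where
  "prob_density M p \<longleftrightarrow> p \<in> borel_measurable M \<and> (\<forall>x\<in>space M. 0 \<le> p x)
     \<and> integrable M p \<and> (\<integral>x. p x \<partial>M) = 1"

definition dTV :: "'a measure \<Rightarrow> ('a \<Rightarrow> real) \<Rightarrow> ('a \<Rightarrow> real) \<Rightarrow> real" where
  "dTV M p q = 1/2 * (\<integral>x. \<bar>p x - q x\<bar> \<partial>M)"

definition gpp_unnorm :: "('a \<Rightarrow> real) \<Rightarrow> ('a \<Rightarrow> real) \<Rightarrow> real \<Rightarrow> real \<Rightarrow> ('a \<Rightarrow> real) \<Rightarrow> 'a \<Rightarrow> real" where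
  "gpp_unnorm L L0 \<xi> \<alpha> \<pi>0 \<theta> =
     (let z = (1 + \<alpha>) / 2;
          p0 = L \<theta> * \<pi>0 \<theta>;
          p1 = L \<theta> * L0 \<theta> * \<pi>0 \<theta>
      in ((1 - \<xi>) * p0 powr z + \<xi> * p1 powr z) powr (1 / z))"

definition gpp :: "'a measure \<Rightarrow> ('a \<Rightarrow> real) \<Rightarrow> ('a \<Rightarrow> real) \<Rightarrow> real \<Rightarrow> real \<Rightarrow> ('a \<Rightarrow> real) \<Rightarrow> 'a \<Rightarrow> real" where
  "gpp M L L0 \<xi> \<alpha> \<pi>0 \<theta> =
     gpp_unnorm L L0 \<xi> \<alpha> \<pi>0 \<theta> / (\<integral>t. gpp_unnorm L L0 \<xi> \<alpha> \<pi>0 t \<partial>M)"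

end

theory Submission
  imports Defs
begin

text \<open>The generalized power posterior is a weighted power mean of \<open>L \<pi>\<^sub>0\<close> and
  \<open>L L\<^sub>0 \<pi>\<^sub>0\<close>; power means are positively homogeneous, so the unnormalised posterior
  factors as \<open>\<pi>\<^sub>0 h\<close> with a weight \<open>h\<close> depending only on the likelihoods, and
  \<open>m\<^sub>L\<^sup>2 \<le> h \<le> M\<^sub>L\<^sup>2\<close> on \<open>\<A>\<close>, which carries all the mass because the priors are
  positive. Reweighting two densities by a common weight with values in \<open>[m, M]\<close> and
  renormalising increases their total variation distance by at most the factor \<open>2 M / m\<close>,
  so \<open>K(\<alpha>) = 2 M\<^sub>L\<^sup>2 / m\<^sub>L\<^sup>2\<close> works (for every \<open>\<alpha>\<close>).\<close>

definition power_mean :: "real \<Rightarrow> real \<Rightarrow> real \<Rightarrow> real \<Rightarrow> real" where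
  "power_mean \<xi> z a b = ((1 - \<xi>) * a powr z + \<xi> * b powr z) powr (1 / z)"

lemma power_mean_mult:
  assumes "0 < z" "0 \<le> \<xi>" "\<xi> \<le> 1" "0 \<le> c" "0 \<le> a" "0 \<le> b"
  shows "power_mean \<xi> z (c * a) (c * b) = c * power_mean \<xi> z a b"
proof -
  have "(1 - \<xi>) * (c * a) powr z + \<xi> * (c * b) powr z
        = c powr z * ((1 - \<xi>) * a powr z + \<xi> * b powr z)"
    using assms by (simp add: powr_mult algebra_simps)
  then show ?thesis
    unfolding power_mean_def using assms by (simp add: powr_mult powr_powr)
qed

lemma power_mean_mono:
  assumes "0 < z" "0 \<le> \<xi>" "\<xi> \<le> 1" "0 \<le> a" "a \<le> a'" "0 \<le> b" "b \<le> b'"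
  shows "power_mean \<xi> z a b \<le> power_mean \<xi> z a' b'"
  unfolding power_mean_def using assms
  by (intro powr_mono2 add_mono mult_left_mono) auto

lemma power_mean_same [simp]:
  assumes "0 < z" "0 \<le> a"
  shows "power_mean \<xi> z a a = a"
  unfolding power_mean_def using assms by (simp add: algebra_simps powr_powr)

lemma power_mean_bounds:
  assumes "0 < z" "0 \<le> \<xi>" "\<xi> \<le> 1" "0 \<le> m" "m \<le> a" "a \<le> M" "m \<le> b" "b \<le> M"
  shows "m \<le> power_mean \<xi> z a b" "power_mean \<xi> z a b \<le> M"
  using power_mean_mono[of z \<xi> m a m b] power_mean_mono[of z \<xi> a M b M] assms by auto

lemma gpp_unnorm_eq_power_mean:
  "gpp_unnorm L L0 \<xi> \<alpha> \<pi> \<theta> = power_mean \<xi> ((1 + \<alpha>) / 2) (L \<theta> * \<pi> \<theta>) (L \<theta> * L0 \<theta> * \<pi> \<theta>)"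
  by (simp add: gpp_unnorm_def power_mean_def Let_def)

lemma gpp_unnorm_eq_prior_mult:
  assumes "-1 < \<alpha>" "0 \<le> \<xi>" "\<xi> \<le> 1" "0 \<le> L \<theta>" "0 \<le> L0 \<theta>" "0 \<le> \<pi> \<theta>"
  shows "gpp_unnorm L L0 \<xi> \<alpha> \<pi> \<theta> = \<pi> \<theta> * gpp_unnorm L L0 \<xi> \<alpha> (\<lambda>_. 1) \<theta>"
  using power_mean_mult[of "(1 + \<alpha>) / 2" \<xi> "\<pi> \<theta>" "L \<theta>" "L \<theta> * L0 \<theta>"] assms
  by (simp add: gpp_unnorm_eq_power_mean mult_ac)

lemma gpp_unnorm_likelihood_bounds:
  assumes "-1 < \<alpha>" "0 \<le> \<xi>" "\<xi> \<le> 1" "0 < m" "m \<le> 1" "1 \<le> M"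
    and "m \<le> L \<theta>" "L \<theta> \<le> M" "m \<le> L0 \<theta>" "L0 \<theta> \<le> M"
  shows "m\<^sup>2 \<le> gpp_unnorm L L0 \<xi> \<alpha> (\<lambda>_. 1) \<theta> \<and> gpp_unnorm L L0 \<xi> \<alpha> (\<lambda>_. 1) \<theta> \<le> M\<^sup>2"
proof -
  have "m\<^sup>2 \<le> m" "M \<le> M\<^sup>2"
    using assms mult_left_le[of m m] mult_right_mono[of 1 M M] by (simp_all add: power2_eq_square)
  then have "m\<^sup>2 \<le> L \<theta>" "L \<theta> \<le> M\<^sup>2"
    using assms by linarith+
  moreover have "m\<^sup>2 \<le> L \<theta> * L0 \<theta>" "L \<theta> * L0 \<theta> \<le> M\<^sup>2"
    using assms by (auto simp: power2_eq_square intro: mult_mono)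
  ultimately show ?thesis
    using power_mean_bounds[of "(1 + \<alpha>) / 2" \<xi> "m\<^sup>2" "L \<theta>" "M\<^sup>2" "L \<theta> * L0 \<theta>"] assms
    by (simp add: gpp_unnorm_eq_power_mean)
qed

lemma borel_measurable_gpp_unnorm [measurable]:
  assumes [measurable]: "L \<in> borel_measurable M" "L0 \<in> borel_measurable M" "\<pi> \<in> borel_measurable M"
  shows "gpp_unnorm L L0 \<xi> \<alpha> \<pi> \<in> borel_measurable M"
  unfolding gpp_unnorm_def Let_def by measurable

lemma integrable_mult_AE_bounded:
  fixes p h :: "'a \<Rightarrow> real"
  assumes "integrable M p" "h \<in> borel_measurable M" "AE x in M. \<bar>h x\<bar> \<le> B"
  shows "integrable M (\<lambda>x. p x * h x)"
proof (rule Bochner_Integration.integrable_bound[where f="\<lambda>x. B * p x"])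
  show "integrable M (\<lambda>x. B * p x)" using assms(1) by simp
  show "AE x in M. norm (p x * h x) \<le> norm (B * p x)"
    using assms(3) by eventually_elim (simp add: abs_mult mult.commute mult_right_mono)
qed (use assms in measurable)

lemma prob_density_integral_mult_ge:
  assumes "prob_density M p" "integrable M (\<lambda>x. p x * h x)" "AE x in M. m \<le> h x"
  shows "m \<le> (\<integral>x. p x * h x \<partial>M)"
proof -
  have "m = (\<integral>x. m * p x \<partial>M)" using assms(1) by (simp add: prob_density_def)
  also have "\<dots> \<le> (\<integral>x. p x * h x \<partial>M)"
  proof (rule integral_mono_AE)
    show "AE x in M. m * p x \<le> p x * h x"
      using assms(3) AE_space
      by eventually_elim (use assms(1) in \<open>auto simp: prob_density_def mult.commute intro: mult_right_mono\<close>)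
  qed (use assms in \<open>auto simp: prob_density_def\<close>)
  finally show ?thesis .
qed

lemma AE_in_set_of_full_mass:
  assumes "prob_density M p" "A \<in> sets M" "(LINT x:A|M. p x) = 1" "\<forall>x\<in>space M. 0 < p x"
  shows "AE x in M. x \<in> A"
proof -
  have p: "integrable M p" "(\<integral>x. p x \<partial>M) = 1" "\<forall>x\<in>space M. 0 \<le> p x"
    using assms(1) by (auto simp: prob_density_def)
  have pA: "integrable M (\<lambda>x. p x * indicator A x)"
    using integrable_real_mult_indicator[OF assms(2) p(1)] .
  have "(\<integral>x. p x - p x * indicator A x \<partial>M) = 0"
    using assms(3) p pA by (simp add: set_lebesgue_integral_def mult.commute)
  then have "AE x in M. p x - p x * indicator A x = 0"
    using p pA by (subst (asm) integral_nonneg_eq_0_iff_AE) (auto simp: indicator_def)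
  then show ?thesis
    using AE_space by eventually_elim (use assms(4) in \<open>auto simp: indicator_def split: if_splits\<close>)
qed

lemma integral_abs_diff_normalise_le:
  fixes f g :: "'a \<Rightarrow> real"
  assumes f: "integrable M f" and g: "integrable M g" "AE x in M. 0 \<le> g x"
    and c: "0 < (\<integral>x. f x \<partial>M)"
  shows "(\<integral>x. \<bar>f x / (\<integral>t. f t \<partial>M) - g x / (\<integral>t. g t \<partial>M)\<bar> \<partial>M)
           \<le> 2 * (\<integral>x. \<bar>f x - g x\<bar> \<partial>M) / (\<integral>t. f t \<partial>M)"
proof -
  define c where "c = (\<integral>t. f t \<partial>M)"
  define c' where "c' = (\<integral>t. g t \<partial>M)"
  define D where "D = (\<integral>x. \<bar>f x - g x\<bar> \<partial>M)"
  have "c' \<ge> 0"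
    unfolding c'_def using g(2) by (rule integral_nonneg_AE)
  have "\<bar>c - c'\<bar> \<le> D"
    unfolding c_def c'_def D_def using f g(1)
    by (simp flip: Bochner_Integration.integral_diff)
  have "(\<integral>x. \<bar>f x / c - g x / c'\<bar> \<partial>M) \<le> (\<integral>x. \<bar>f x - g x\<bar> / c + \<bar>1 / c - 1 / c'\<bar> * g x \<partial>M)"
  proof (rule integral_mono_AE')
    show "AE x in M. \<bar>f x / c - g x / c'\<bar> \<le> \<bar>f x - g x\<bar> / c + \<bar>1 / c - 1 / c'\<bar> * g x"
      using g(2)
    proof eventually_elim
      case (elim x)
      have "f x / c - g x / c' = (f x - g x) / c + (1 / c - 1 / c') * g x"
        by (simp add: diff_divide_distrib algebra_simps)
      also have "\<bar>\<dots>\<bar> \<le> \<bar>(f x - g x) / c\<bar> + \<bar>(1 / c - 1 / c') * g x\<bar>"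
        by (rule abs_triangle_ineq)
      also have "\<dots> = \<bar>f x - g x\<bar> / c + \<bar>1 / c - 1 / c'\<bar> * g x"
        using elim c by (simp add: abs_mult c_def)
      finally show ?case .
    qed
    show "AE x in M. 0 \<le> \<bar>f x - g x\<bar> / c + \<bar>1 / c - 1 / c'\<bar> * g x"
      using g(2) by eventually_elim (use c in \<open>simp add: c_def\<close>)
  qed (use f g in simp)
  also have "\<dots> = D / c + \<bar>1 / c - 1 / c'\<bar> * c'"
    unfolding D_def c'_def using f g by simp
  also have "\<bar>1 / c - 1 / c'\<bar> * c' \<le> \<bar>c - c'\<bar> / c"
    using c \<open>c' \<ge> 0\<close> by (cases "c' = 0") (simp_all add: c_def field_simps abs_div)
  also have "D / c + \<bar>c - c'\<bar> / c \<le> 2 * D / c"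
    using \<open>\<bar>c - c'\<bar> \<le> D\<close> c by (simp add: c_def field_simps)
  finally show ?thesis
    unfolding c_def c'_def D_def by simp
qed

definition reweight :: "'a measure \<Rightarrow> ('a \<Rightarrow> real) \<Rightarrow> ('a \<Rightarrow> real) \<Rightarrow> 'a \<Rightarrow> real" where
  "reweight M h p x = p x * h x / (\<integral>t. p t * h t \<partial>M)"

lemma dTV_reweight_le:
  fixes p q h :: "'a \<Rightarrow> real"
  assumes p: "prob_density M p" and q: "prob_density M q"
    and h: "h \<in> borel_measurable M" "AE x in M. m \<le> h x \<and> h x \<le> B" and m: "0 < m"
  shows "dTV M (reweight M h p) (reweight M h q) \<le> 2 * B / m * dTV M p q"
proof -
  have p': "integrable M p" "\<forall>x\<in>space M. 0 \<le> p x" and q': "integrable M q" "\<forall>x\<in>space M. 0 \<le> q x"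
    using p q by (auto simp: prob_density_def)
  have "AE x in M. \<bar>h x\<bar> \<le> B"
    using h(2) by eventually_elim (use m in auto)
  then have ph: "integrable M (\<lambda>x. p x * h x)" and qh: "integrable M (\<lambda>x. q x * h x)"
    using p' q' h(1) by (auto intro: integrable_mult_AE_bounded)
  have ph_ge: "m \<le> (\<integral>x. p x * h x \<partial>M)"
    using p ph h(2) by (auto intro: prob_density_integral_mult_ge elim: AE_mp)
  have "AE x in M. 0 \<le> q x * h x"
    using h(2) AE_space by eventually_elim (use q' m in simp)
  then have "dTV M (reweight M h p) (reweight M h q)
             \<le> (\<integral>x. \<bar>p x * h x - q x * h x\<bar> \<partial>M) / (\<integral>x. p x * h x \<partial>M)"
    using integral_abs_diff_normalise_le[OF ph qh] ph_ge m
    unfolding dTV_def reweight_def by (simp add: ac_simps)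
  also have "\<dots> \<le> (\<integral>x. B * \<bar>p x - q x\<bar> \<partial>M) / m"
  proof (rule frac_le)
    show "(\<integral>x. \<bar>p x * h x - q x * h x\<bar> \<partial>M) \<le> (\<integral>x. B * \<bar>p x - q x\<bar> \<partial>M)"
    proof (rule integral_mono_AE')
      show "AE x in M. \<bar>p x * h x - q x * h x\<bar> \<le> B * \<bar>p x - q x\<bar>"
        using h(2)
      proof eventually_elim
        case (elim x)
        then have "\<bar>p x * h x - q x * h x\<bar> = \<bar>p x - q x\<bar> * h x"
          using m by (simp add: abs_mult flip: left_diff_distrib)
        also have "\<dots> \<le> B * \<bar>p x - q x\<bar>"
          using elim by (metis abs_ge_zero mult.commute mult_right_mono)
        finally show ?case .
      qed
      show "AE x in M. 0 \<le> B * \<bar>p x - q x\<bar>"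
        using h(2) by eventually_elim (use m in simp)
    qed (use p' q' in simp)
    moreover have "0 \<le> (\<integral>x. \<bar>p x * h x - q x * h x\<bar> \<partial>M)"
      by (simp add: integral_nonneg_AE)
    ultimately show "0 \<le> (\<integral>x. B * \<bar>p x - q x\<bar> \<partial>M)"
      by linarith
  qed (use ph_ge m in auto)
  also have "\<dots> = 2 * B / m * dTV M p q"
    by (simp add: dTV_def)
  finally show ?thesis .
qed

lemma gpp_eq_reweight:
  assumes "-1 < \<alpha>" "0 \<le> \<xi>" "\<xi> \<le> 1" "\<forall>\<theta>\<in>space M. 0 \<le> L \<theta> \<and> 0 \<le> L0 \<theta>"
    and "\<forall>\<theta>\<in>space M. 0 \<le> \<pi> \<theta>" "\<theta> \<in> space M"
  shows "gpp M L L0 \<xi> \<alpha> \<pi> \<theta> = reweight M (gpp_unnorm L L0 \<xi> \<alpha> (\<lambda>_. 1)) \<pi> \<theta>"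
proof -
  have "gpp_unnorm L L0 \<xi> \<alpha> \<pi> t = \<pi> t * gpp_unnorm L L0 \<xi> \<alpha> (\<lambda>_. 1) t" if "t \<in> space M" for t
    using assms that by (intro gpp_unnorm_eq_prior_mult) auto
  then show ?thesis
    using assms(6) unfolding gpp_def reweight_def by (simp cong: Bochner_Integration.integral_cong)
qed

lemma dTV_cong:
  assumes "\<And>x. x \<in> space M \<Longrightarrow> p x = p' x" "\<And>x. x \<in> space M \<Longrightarrow> q x = q' x"
  shows "dTV M p q = dTV M p' q'"
  unfolding dTV_def using assms by (simp cong: Bochner_Integration.integral_cong)

theorem mainTheorem8:
  fixes M :: "'a measure" and L L0 :: "'a \<Rightarrow> real"
    and \<xi> m_L M_L m_pi M_pi :: real
  assumes "L \<in> borel_measurable M" and "L0 \<in> borel_measurable M"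
    and "\<forall>\<theta>\<in>space M. 0 \<le> L \<theta> \<and> 0 \<le> L0 \<theta>"
    and "0 \<le> \<xi>" and "\<xi> \<le> 1"
    and "0 < m_L" and "m_L \<le> 1" and "1 \<le> M_L"
    and "0 < m_pi" and "m_pi \<le> 1" and "1 \<le> M_pi"
  shows "\<exists>K :: real \<Rightarrow> real. \<forall>\<alpha> \<pi>0 \<pi>0' A.
           \<alpha> > -1 \<and> prob_density M \<pi>0 \<and> prob_density M \<pi>0'
           \<and> A \<in> sets M \<and> (LINT x:A|M. \<pi>0 x) = 1 \<and> (LINT x:A|M. \<pi>0' x) = 1
           \<and> (\<forall>\<theta>\<in>A. m_L \<le> L \<theta> \<and> L \<theta> \<le> M_L \<and> m_L \<le> L0 \<theta> \<and> L0 \<theta> \<le> M_L)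
           \<and> (\<forall>\<theta>\<in>space M. m_pi \<le> \<pi>0 \<theta> \<and> \<pi>0 \<theta> \<le> M_pi \<and> m_pi \<le> \<pi>0' \<theta> \<and> \<pi>0' \<theta> \<le> M_pi)
           \<longrightarrow> dTV M (gpp M L L0 \<xi> \<alpha> \<pi>0) (gpp M L L0 \<xi> \<alpha> \<pi>0') \<le> K \<alpha> * dTV M \<pi>0 \<pi>0'"
proof (intro exI[of _ "\<lambda>_. 2 * M_L\<^sup>2 / m_L\<^sup>2"] allI impI, elim conjE)
  fix \<alpha> :: real and \<pi> \<pi>' :: "'a \<Rightarrow> real" and A
  assume \<alpha>: "\<alpha> > -1" and \<pi>: "prob_density M \<pi>" and \<pi>': "prob_density M \<pi>'"
    and A: "A \<in> sets M" "(LINT x:A|M. \<pi> x) = 1" "(LINT x:A|M. \<pi>' x) = 1"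
    and L_bounds: "\<forall>\<theta>\<in>A. m_L \<le> L \<theta> \<and> L \<theta> \<le> M_L \<and> m_L \<le> L0 \<theta> \<and> L0 \<theta> \<le> M_L"
    and \<pi>_bounds: "\<forall>\<theta>\<in>space M. m_pi \<le> \<pi> \<theta> \<and> \<pi> \<theta> \<le> M_pi \<and> m_pi \<le> \<pi>' \<theta> \<and> \<pi>' \<theta> \<le> M_pi"
  define h where "h = gpp_unnorm L L0 \<xi> \<alpha> (\<lambda>_. 1)"
  have "AE x in M. x \<in> A"
    using AE_in_set_of_full_mass[OF \<pi> A(1,2)] \<pi>_bounds assms by force
  then have h_bounds: "AE x in M. m_L\<^sup>2 \<le> h x \<and> h x \<le> M_L\<^sup>2"
  proof eventually_elim
    case (elim \<theta>)
    then show ?case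
      unfolding h_def using L_bounds \<alpha> assms(4-11)
      by (intro gpp_unnorm_likelihood_bounds) auto
  qed
  have "h \<in> borel_measurable M"
    unfolding h_def using assms(1,2) by measurable
  have "dTV M (gpp M L L0 \<xi> \<alpha> \<pi>) (gpp M L L0 \<xi> \<alpha> \<pi>') = dTV M (reweight M h \<pi>) (reweight M h \<pi>')"
    using \<pi> \<pi>' \<alpha> assms(3-5) unfolding h_def prob_density_def
    by (intro dTV_cong) (simp_all add: gpp_eq_reweight)
  also have "\<dots> \<le> 2 * M_L\<^sup>2 / m_L\<^sup>2 * dTV M \<pi> \<pi>'"
    using assms(6) by (intro dTV_reweight_le[OF \<pi> \<pi>' \<open>h \<in> borel_measurable M\<close> h_bounds]) simp
  finally show "dTV M (gpp M L L0 \<xi> \<alpha> \<pi>) (gpp M L L0 \<xi> \<alpha> \<pi>') \<le> 2 * M_L\<^sup>2 / m_L\<^sup>2 * dTV M \<pi> \<pi>'" .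
qed

end
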